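(* Let $\lambda$ be a partition of $d$ with at most $n$ parts, padded with zeros to length $n$, and let $\nu$ be its reduction. Then $|N_\lambda|=|N_\nu|$. Moreover, $\mathcal{M}_{n,\lambda}=\mathcal{M}_{n,\nu}$ in $\mathbb{P}^{|N_\nu|-1}$, where the coordinates are identified by the bijection $N_\lambda\to N_\nu$ that replaces each entry of an index vector by the corresponding entry of $\nu$, as described below.
   Context: Work over $\mathbb{C}$. Reduction: pad $\lambda$ with zeros to length $n$. Let the distinct values occurring in the padded $\lambda$ (including $0$ if present) have multiplicities $k_0\ge k_1\ge\cdots\ge k_s$, and let $v_j$ denote the value with multiplicity $k_j$. The reduction of $\lambda$ is $$\nu=(\underbrace{s,\ldots,s}_{k_s},\underbrace{s-1,\ldots,s-1}_{k_{s-1}},\ldots,\underbrace{1,\ldots,1}_{k_1},\underbrace{0,\ldots,0}_{k_0}).$$ For example, both $(8,5,5,4)$ and $(7,7,3,0)$ (with $n=4$) have reduction $(2,1,0,0)$. The coordinate bijection replaces each entry $v_j$ of an index vector by $j$. For a vector $\kappa\in\mathbb{Z}_{\ge0}^n$ (such as the padded $\lambda$ or $\nu$), $N_\kappa$ is the set of all rearrangements $(i_1,\ldots,i_n)$ of $\kappa$; equivalently, the index vectors whose multiset of nonzero entries equals the nonzero parts of $\kappa$. The variety $\mathcal{M}_{n,\kappa}\subset\mathbb{P}^{|N_\kappa|-1}$, with coordinates $m_{i_1\cdots i_n}$ for $(i_1,\ldots,i_n)\in N_\kappa$, is the Zariski closure of the image of the monomial map $(\mu_{ki})\mapsto(\mu_{1i_1}\cdots\mu_{ni_n})_{(i_1,\ldots,i_n)\in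 N_\kappa}$, with the convention $\mu_{k0}=1$. *)

theory Defs
  imports Complex_Main "HOL-Library.Poly_Mapping" "HOL-Library.Multiset"
begin

definition Nset :: "nat \<Rightarrow> nat list \<Rightarrow> nat list set" where
  "Nset n kappa = {is. length is = n \<and> mset is = mset kappa}"

text \<open>Points of the ambient projective space are represented by (nonzero)
  coordinate vectors in the affine cone: functions on index vectors vanishing
  outside N_kappa.\<close>

text \<open>Polynomials in the variables indexed by nat list, with complex
  coefficients: finitely supported maps from monomials (exponent vectors) to
  coefficients.\<close>
type_synonym cpoly = "(nat list \<Rightarrow>\<^sub>0 nat) \<Rightarrow>\<^sub>0 complex"

definition peval :: "cpoly \<Rightarrow> (nat list \<Rightarrow> complex) \<Rightarrow> complex" where
  "peval p x = (\<Sum>m\<in>Poly_Mapping.keys p. Poly_Mapping.lookup p m * (\<Prod>v\<in>Poly_Mapping.keys m. x v ^ (Poly_Mapping.lookup m v)))"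

definition homogeneous :: "cpoly \<Rightarrow> bool" where
  "homogeneous p \<longleftrightarrow> (\<exists>D. \<forall>m::nat list \<Rightarrow>\<^sub>0 nat\<in>Poly_Mapping.keys p. (\<Sum>v\<in>Poly_Mapping.keys m. Poly_Mapping.lookup m v) = (D::nat))"

definition proj_zariski_closure :: "nat list set \<Rightarrow> (nat list \<Rightarrow> complex) set \<Rightarrow> (nat list \<Rightarrow> complex) set" where
  "proj_zariski_closure N S =
     {x. (\<forall>i. i \<notin> N \<longrightarrow> x i = 0) \<and> x \<noteq> (\<lambda>_. 0) \<and>
         (\<forall>p. homogeneous p \<longrightarrow> (\<forall>s\<in>S. peval p s = 0) \<longrightarrow> peval p x = 0)}"

definition monomial_point :: "nat \<Rightarrow> nat list \<Rightarrow> (nat \<Rightarrow> nat \<Rightarrow> complex) \<Rightarrow> nat list \<Rightarrow> complex" where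
  "monomial_point n kappa mu is =
     (if is \<in> Nset n kappa then (\<Prod>k<n. (if is ! k = 0 then 1 else mu k (is ! k))) else 0)"

definition M_var :: "nat \<Rightarrow> nat list \<Rightarrow> (nat list \<Rightarrow> complex) set" where
  "M_var n kappa = proj_zariski_closure (Nset n kappa)
     {x. (\<exists>mu. x = monomial_point n kappa mu) \<and> x \<noteq> (\<lambda>_. 0)}"

definition reduction_labeling :: "nat list \<Rightarrow> (nat \<Rightarrow> nat) \<Rightarrow> bool" where
  "reduction_labeling lam f \<longleftrightarrow>
     inj_on f (set lam) \<and> f ` set lam = {0..<card (set lam)} \<and>
     (\<forall>u\<in>set lam. \<forall>v\<in>set lam. f u \<le> f v \<longrightarrow> count_list lam v \<le> count_list lam u)"

definition reduction :: "nat list \<Rightarrow> (nat \<Rightarrow> nat) \<Rightarrow> nat list" where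
  "reduction lam f = rev (sort (map f lam))"

end

theory Submission
  imports Defs
begin

(* Under the coordinate bijection map f, the point of the monomial map of nu with weights mu
   pulls back to the point of the monomial map of lambda whose weight for the entry v in row k
   is mu k (f v); as f is injective on the entries of lambda, every weight pattern for lambda
   arises this way. The only mismatch is the convention mu_{k0} = 1, which concerns the entry 0
   for lambda but the entry with label 0 for nu. It is harmless: rescaling one column of weights
   by nonzero scalars multiplies the point by a scalar, so a homogeneous polynomial vanishing on
   the normalised image vanishes on the image with all weights free (where a weight of that
   column is 0, by continuity). Finally, permuting coordinates commutes with the projective
   Zariski closure, since it acts on homogeneous polynomials by renaming variables. *)

lemma inj_on_extends_to_bij:
  fixes h :: "'a \<Rightarrow> 'a"
  assumes "finite A" "inj_on h A"
  obtains \<pi> where "bij \<pi>" "\<And>x. x \<in> A \<Longrightarrow> \<pi> x = h x"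
proof -
  have "\<exists>\<pi>. bij \<pi> \<and> (\<forall>x\<in>A. \<pi> x = h x)"
    using assms
  proof (induction A rule: finite_induct)
    case empty
    show ?case using bij_id by blast
  next
    case (insert a A)
    then obtain \<pi> where \<pi>: "bij \<pi>" "\<forall>x\<in>A. \<pi> x = h x" by auto
    define swap where "swap y = (if y = \<pi> a then h a else if y = h a then \<pi> a else y)" for y
    have "swap \<circ> swap = id" by (auto simp: swap_def fun_eq_iff)
    then have "bij swap" by (metis o_bij)
    moreover have "swap (\<pi> x) = h x" if "x \<in> insert a A" for x
    proof (cases "x = a")
      case False
      with that have "x \<in> A" by simp
      have "\<pi> x \<noteq> \<pi> a" using False \<pi>(1) by (metis bij_is_inj injD)
      moreover have "h x \<noteq> h a" using insert.prems False that by (auto simp: inj_on_def)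
      ultimately show ?thesis using \<pi>(2) \<open>x \<in> A\<close> by (simp add: swap_def)
    qed (simp add: swap_def)
    ultimately show ?case using \<pi>(1) bij_comp by (metis comp_apply)
  qed
  with that show ?thesis by blast
qed

lemma homogeneous_peval_scale:
  assumes "homogeneous p"
  obtains D where "\<And>c x. peval p (\<lambda>v. c * x v) = c ^ D * peval p x"
proof -
  obtain D where D: "\<And>m. m \<in> Poly_Mapping.keys p \<Longrightarrow> (\<Sum>v\<in>Poly_Mapping.keys m. Poly_Mapping.lookup m v) = D"
    using assms unfolding homogeneous_def by blast
  have "peval p (\<lambda>v. c * x v) = c ^ D * peval p x" for c x
  proof -
    have "(\<Prod>v\<in>Poly_Mapping.keys m. (c * x v) ^ Poly_Mapping.lookup m v)
        = c ^ D * (\<Prod>v\<in>Poly_Mapping.keys m. x v ^ Poly_Mapping.lookup m v)"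
      if "m \<in> Poly_Mapping.keys p" for m
    proof -
      have "(\<Prod>v\<in>Poly_Mapping.keys m. c ^ Poly_Mapping.lookup m v) = c ^ D"
        using D[OF that] by (simp add: power_sum[symmetric])
      then show ?thesis by (simp add: power_mult_distrib prod.distrib)
    qed
    then show ?thesis
      unfolding peval_def by (simp add: sum_distrib_left ac_simps cong: sum.cong)
  qed
  with that show ?thesis by blast
qed

lemma homogeneous_peval_zero:
  assumes "homogeneous p" "peval p s = 0"
  shows "peval p (\<lambda>_. 0) = 0"
proof -
  obtain D where "\<And>c x. peval p (\<lambda>v. c * x v) = c ^ D * peval p x"
    using homogeneous_peval_scale[OF assms(1)] by blast
  from this[of 0 s] show ?thesis using assms(2) by simp
qed

lemma continuous_peval:
  assumes "\<And>v. continuous F (\<lambda>t. X t v)"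
  shows "continuous F (\<lambda>t. peval p (X t))"
  unfolding peval_def by (intro continuous_intros assms)

lemma bij_betw_vimage: "bij f \<Longrightarrow> bij_betw f (f -` K) K"
  by (metis bij_betw_def bij_betw_subset subset_UNIV surj_image_vimage_eq)

lemma homogeneous_peval_comp_bij:
  fixes \<tau> :: "nat list \<Rightarrow> nat list"
  assumes "bij \<tau>" "homogeneous p"
  obtains q where "homogeneous q" "\<And>z. peval q z = peval p (z \<circ> \<tau>)"
proof -
  define rename :: "(nat list \<Rightarrow>\<^sub>0 nat) \<Rightarrow> (nat list \<Rightarrow>\<^sub>0 nat)" where "rename = Poly_Mapping.map_key \<tau>"
  have inj: "inj \<tau>" "inj (inv \<tau>)" using assms(1) bij_imp_bij_inv bij_is_inj by blast+
  have inverse: "\<tau> \<circ> inv \<tau> = id" "inv \<tau> \<circ> \<tau> = id"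
    using bij_is_surj[OF assms(1), unfolded surj_iff] inj(1)[unfolded inj_iff] .
  have "rename (Poly_Mapping.map_key (inv \<tau>) m) = m" "Poly_Mapping.map_key (inv \<tau>) (rename m) = m" for m
    using inj unfolding rename_def by (simp_all add: map_key_compose inverse map_key_id[folded id_def])
  then have bij_rename: "bij rename" by (metis bij_betw_byWitness subset_UNIV)
  have lookup_rename: "Poly_Mapping.lookup (rename m) v = Poly_Mapping.lookup m (\<tau> v)" for m v
    unfolding rename_def using inj by (simp add: map_key.rep_eq)
  have keys_rename: "Poly_Mapping.keys (rename m) = \<tau> -` Poly_Mapping.keys m" for m
    unfolding rename_def using inj by (simp add: keys_map_key)
  define q where "q = Poly_Mapping.map_key rename p"
  have lookup_q: "Poly_Mapping.lookup q m = Poly_Mapping.lookup p (rename m)" for m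
    unfolding q_def using bij_rename by (simp add: bij_is_inj map_key.rep_eq)
  have keys_q: "Poly_Mapping.keys q = rename -` Poly_Mapping.keys p"
    unfolding q_def using bij_rename by (simp add: bij_is_inj keys_map_key)
  have degree_rename: "(\<Sum>v\<in>Poly_Mapping.keys (rename m). Poly_Mapping.lookup (rename m) v)
      = (\<Sum>v\<in>Poly_Mapping.keys m. Poly_Mapping.lookup m v)" for m
    unfolding keys_rename lookup_rename by (rule sum.reindex_bij_betw[OF bij_betw_vimage[OF assms(1)]])
  have "homogeneous q"
    using assms(2) unfolding homogeneous_def keys_q by (metis degree_rename vimageD)
  moreover have "peval q z = peval p (z \<circ> \<tau>)" for z
  proof -
    have monomial_rename: "(\<Prod>v\<in>Poly_Mapping.keys (rename m). (z \<circ> \<tau>) v ^ Poly_Mapping.lookup (rename m) v)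
        = (\<Prod>v\<in>Poly_Mapping.keys m. z v ^ Poly_Mapping.lookup m v)" for m
      unfolding keys_rename lookup_rename comp_apply
      by (rule prod.reindex_bij_betw[OF bij_betw_vimage[OF assms(1)]])
    have "peval q z = (\<Sum>m\<in>rename -` Poly_Mapping.keys p. Poly_Mapping.lookup p (rename m)
        * (\<Prod>v\<in>Poly_Mapping.keys (rename m). (z \<circ> \<tau>) v ^ Poly_Mapping.lookup (rename m) v))"
      unfolding peval_def keys_q lookup_q monomial_rename ..
    also have "\<dots> = peval p (z \<circ> \<tau>)"
      unfolding peval_def by (rule sum.reindex_bij_betw[OF bij_betw_vimage[OF bij_rename]])
    finally show ?thesis .
  qed
  ultimately show ?thesis using that by blast
qed

lemma proj_zariski_closure_cong:
  assumes "\<And>p. homogeneous p \<Longrightarrow> (\<forall>s\<in>S. peval p s = 0) \<longleftrightarrow> (\<forall>s\<in>T. peval p s = 0)"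
  shows "proj_zariski_closure N S = proj_zariski_closure N T"
  unfolding proj_zariski_closure_def using assms by blast

lemma proj_zariski_closure_empty: "proj_zariski_closure {} S = {}"
  unfolding proj_zariski_closure_def by auto

lemma proj_zariski_closure_vanishes:
  "x \<in> proj_zariski_closure N S \<Longrightarrow> i \<notin> N \<Longrightarrow> x i = 0"
  unfolding proj_zariski_closure_def by blast

lemma proj_zariski_closure_comp_bij_subset:
  fixes \<tau> :: "nat list \<Rightarrow> nat list"
  assumes "bij \<tau>" "\<And>i. i \<in> B \<longleftrightarrow> \<tau> i \<in> A"
  shows "(\<lambda>y. y \<circ> \<tau>) ` proj_zariski_closure A S \<subseteq> proj_zariski_closure B ((\<lambda>y. y \<circ> \<tau>) ` S)"
proof clarify
  fix y assume y: "y \<in> proj_zariski_closure A S"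
  show "y \<circ> \<tau> \<in> proj_zariski_closure B ((\<lambda>y. y \<circ> \<tau>) ` S)"
    unfolding proj_zariski_closure_def
  proof (intro CollectI conjI allI impI)
    fix i assume "i \<notin> B"
    then show "(y \<circ> \<tau>) i = 0" using assms(2) proj_zariski_closure_vanishes[OF y] by simp
  next
    obtain j where "y j \<noteq> 0" using y unfolding proj_zariski_closure_def by (auto simp: fun_eq_iff)
    then have "(y \<circ> \<tau>) (inv \<tau> j) \<noteq> 0" using assms(1) by (simp add: bij_is_surj surj_f_inv_f)
    then show "y \<circ> \<tau> \<noteq> (\<lambda>_. 0)" by metis
  next
    fix p assume "homogeneous p" and vanish: "\<forall>s\<in>(\<lambda>y. y \<circ> \<tau>) ` S. peval p s = 0"
    then obtain q where "homogeneous q" and q: "\<And>z. peval q z = peval p (z \<circ> \<tau>)"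
      using homogeneous_peval_comp_bij assms(1) by blast
    moreover have "\<forall>s\<in>S. peval q s = 0" using vanish q by simp
    ultimately show "peval p (y \<circ> \<tau>) = 0"
      using y unfolding proj_zariski_closure_def by (simp flip: q)
  qed
qed

lemma proj_zariski_closure_comp_bij:
  fixes \<tau> :: "nat list \<Rightarrow> nat list"
  assumes "bij \<tau>" "\<And>i. i \<in> B \<longleftrightarrow> \<tau> i \<in> A"
  shows "proj_zariski_closure B ((\<lambda>y. y \<circ> \<tau>) ` S) = (\<lambda>y. y \<circ> \<tau>) ` proj_zariski_closure A S"
proof
  have inverse: "(y \<circ> inv \<tau>) \<circ> \<tau> = y" "(y \<circ> \<tau>) \<circ> inv \<tau> = y" for y :: "nat list \<Rightarrow> complex"
    using assms(1) by (simp_all add: fun_eq_iff bij_is_inj bij_is_surj surj_f_inv_f)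
  have "(\<lambda>y. y \<circ> inv \<tau>) ` proj_zariski_closure B ((\<lambda>y. y \<circ> \<tau>) ` S)
      \<subseteq> proj_zariski_closure A ((\<lambda>y. y \<circ> inv \<tau>) ` (\<lambda>y. y \<circ> \<tau>) ` S)"
    using assms by (intro proj_zariski_closure_comp_bij_subset) (simp_all add: bij_imp_bij_inv bij_is_surj surj_f_inv_f)
  also have "(\<lambda>y. y \<circ> inv \<tau>) ` (\<lambda>y. y \<circ> \<tau>) ` S = S"
    by (simp add: image_image inverse)
  finally have "x \<circ> inv \<tau> \<in> proj_zariski_closure A S"
    if "x \<in> proj_zariski_closure B ((\<lambda>y. y \<circ> \<tau>) ` S)" for x
    using that by blast
  then show "proj_zariski_closure B ((\<lambda>y. y \<circ> \<tau>) ` S) \<subseteq> (\<lambda>y. y \<circ> \<tau>) ` proj_zariski_closure A S"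
    by (metis image_eqI inverse(1) subsetI)
qed (rule proj_zariski_closure_comp_bij_subset[OF assms])

(* The monomial map without the convention mu_{k0} = 1: every entry, 0 included, has a weight. *)
definition weighted_point :: "nat list set \<Rightarrow> nat \<Rightarrow> (nat \<Rightarrow> nat \<Rightarrow> complex) \<Rightarrow> nat list \<Rightarrow> complex" where
  "weighted_point N n w is = (if is \<in> N then (\<Prod>k<n. w k (is ! k)) else 0)"

definition weighted_points ::
    "nat list set \<Rightarrow> nat \<Rightarrow> (nat \<Rightarrow> nat \<Rightarrow> complex) set \<Rightarrow> (nat list \<Rightarrow> complex) set" where
  "weighted_points N n W = weighted_point N n ` W - {\<lambda>_. 0}"

lemma weighted_point_rescale:
  assumes "\<And>k. k < n \<Longrightarrow> w k c \<noteq> 0"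
  shows "weighted_point N n w = (\<lambda>is. (\<Prod>k<n. w k c) * weighted_point N n (\<lambda>k v. w k v / w k c) is)"
proof
  fix "is"
  have "(\<Prod>k<n. w k (is ! k)) = (\<Prod>k<n. w k c) * (\<Prod>k<n. w k (is ! k) / w k c)"
    unfolding prod.distrib[symmetric] using assms by (intro prod.cong) auto
  then show "weighted_point N n w is = (\<Prod>k<n. w k c) * weighted_point N n (\<lambda>k v. w k v / w k c) is"
    unfolding weighted_point_def by simp
qed

lemma isCont_weighted_point_shift:
  "isCont (\<lambda>t. weighted_point N n (\<lambda>k v. w k v + of_bool (v = c) * t) is) t"
  unfolding weighted_point_def
  by (cases "is \<in> N") (auto intro!: continuous_intros)

lemma homogeneous_vanishes_on_weighted_points:
  assumes "homogeneous p" "N \<noteq> {}"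
    and vanish: "\<forall>s\<in>weighted_points N n {w. \<forall>k<n. w k c = 1}. peval p s = 0"
  shows "peval p (weighted_point N n w) = 0"
proof -
  obtain D where D: "\<And>c x. peval p (\<lambda>v. c * x v) = c ^ D * peval p x"
    using homogeneous_peval_scale[OF assms(1)] by blast
  have "peval p (\<lambda>_. 0) = 0"
  proof (rule homogeneous_peval_zero[OF assms(1)])
    obtain i where "i \<in> N" using assms(2) by blast
    then have "weighted_point N n (\<lambda>_ _. 1) i = 1" by (simp add: weighted_point_def)
    then have "weighted_point N n (\<lambda>_ _. 1) \<in> weighted_points N n {w. \<forall>k<n. w k c = 1}"
      unfolding weighted_points_def by (auto dest: fun_cong[of _ _ i])
    then show "peval p (weighted_point N n (\<lambda>_ _. 1)) = 0" using vanish by blast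
  qed
  then have normalized: "peval p (weighted_point N n w') = 0" if "\<forall>k<n. w' k c = 1" for w'
    using vanish that unfolding weighted_points_def by (cases "weighted_point N n w' = (\<lambda>_. 0)") auto
  have generic: "peval p (weighted_point N n w') = 0" if "\<And>k. k < n \<Longrightarrow> w' k c \<noteq> 0" for w'
    using normalized[of "\<lambda>k v. w' k v / w' k c"] that
    by (simp add: weighted_point_rescale[of n w' c N, OF that] D)
  \<comment> \<open>Shifting the column c by a small t \<noteq> 0 makes all its weights nonzero.\<close>
  define g where "g t = peval p (weighted_point N n (\<lambda>k v. w k v + of_bool (v = c) * t))" for t
  have "isCont g 0"
    unfolding g_def by (intro continuous_peval isCont_weighted_point_shift)
  moreover have "\<forall>\<^sub>F t in at 0. \<forall>k\<in>{..<n}. t \<noteq> - w k c"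
    by (intro eventually_ball_finite ballI eventually_neq_at_within) auto
  then have "\<forall>\<^sub>F t in at 0. g t = 0"
    by (rule eventually_mono) (auto simp: g_def add_eq_0_iff intro!: generic)
  ultimately have "g 0 = 0"
    using at_within_isCont_imp_nhds[where f = g and g = "\<lambda>_. 0"] eventually_nhds_x_imp_x by auto
  then show ?thesis by (simp add: g_def)
qed

lemma proj_zariski_closure_weighted_points_normalize:
  "proj_zariski_closure N (weighted_points N n {w. \<forall>k<n. w k c = 1})
     = proj_zariski_closure N (weighted_points N n UNIV)"
proof (cases "N = {}")
  case False
  show ?thesis
  proof (rule proj_zariski_closure_cong)
    fix p assume "homogeneous p"
    then show "(\<forall>s\<in>weighted_points N n {w. \<forall>k<n. w k c = 1}. peval p s = 0)
        \<longleftrightarrow> (\<forall>s\<in>weighted_points N n UNIV. peval p s = 0)"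
      using homogeneous_vanishes_on_weighted_points[OF _ False] unfolding weighted_points_def by blast
  qed
qed (simp add: proj_zariski_closure_empty)

lemma M_var_eq_closure_weighted_points:
  "M_var n kappa = proj_zariski_closure (Nset n kappa) (weighted_points (Nset n kappa) n UNIV)"
proof -
  have "monomial_point n kappa mu = weighted_point (Nset n kappa) n (\<lambda>k v. if v = 0 then 1 else mu k v)" for mu
    unfolding monomial_point_def weighted_point_def by (simp add: fun_eq_iff)
  moreover have "weighted_point (Nset n kappa) n w = monomial_point n kappa w" if "\<forall>k<n. w k 0 = 1" for w
    unfolding monomial_point_def weighted_point_def using that by (auto simp: fun_eq_iff intro!: prod.cong)
  ultimately have "{x. (\<exists>mu. x = monomial_point n kappa mu) \<and> x \<noteq> (\<lambda>_. 0)}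
      = weighted_points (Nset n kappa) n {w. \<forall>k<n. w k 0 = 1}"
    unfolding weighted_points_def by fastforce
  then show ?thesis
    unfolding M_var_def by (simp add: proj_zariski_closure_weighted_points_normalize)
qed

lemma Nset_mset_cong: "mset xs = mset ys \<Longrightarrow> Nset n xs = Nset n ys"
  unfolding Nset_def by simp

lemma set_Nset: "is \<in> Nset n xs \<Longrightarrow> set is = set xs"
  unfolding Nset_def by (auto dest: mset_eq_setD)

lemma length_Nset: "is \<in> Nset n xs \<Longrightarrow> length is = n"
  unfolding Nset_def by simp

lemma finite_Nset: "finite (Nset n xs)"
proof (rule finite_subset)
  show "Nset n xs \<subseteq> {is. set is \<subseteq> set xs \<and> length is = n}"
    using set_Nset length_Nset by blast
qed (simp add: finite_lists_length_eq)

lemma bij_betw_map_Nset: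
  assumes "inj_on f (set xs)"
  shows "bij_betw (map f) (Nset n xs) (Nset n (map f xs))"
proof (rule bij_betw_imageI)
  show "inj_on (map f) (Nset n xs)"
    using assms by (intro inj_onI) (metis map_inj_on set_Nset sup.idem)
  show "map f ` Nset n xs = Nset n (map f xs)"
  proof (intro equalityI subsetI)
    fix js assume js: "js \<in> Nset n (map f xs)"
    define g where "g = inv_into (set xs) f"
    have "mset (map g js) = image_mset (g \<circ> f) (mset xs)"
      using js unfolding Nset_def by (simp add: multiset.map_comp)
    also have "\<dots> = image_mset id (mset xs)"
      unfolding g_def using assms by (intro image_mset_cong) (simp add: inv_into_f_f)
    finally have "map g js \<in> Nset n xs"
      using length_Nset[OF js] unfolding Nset_def by simp
    moreover have "set js = f ` set xs" using set_Nset[OF js] by simp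
    then have "js = map f (map g js)"
      unfolding map_map g_def by (intro map_idI[symmetric]) (simp add: f_inv_into_f)
    ultimately show "js \<in> map f ` Nset n xs" by blast
  qed (auto simp: Nset_def)
qed

definition pullback :: "nat list set \<Rightarrow> (nat list \<Rightarrow> nat list) \<Rightarrow> (nat list \<Rightarrow> complex) \<Rightarrow> nat list \<Rightarrow> complex" where
  "pullback B h y is = (if is \<in> B then y (h is) else 0)"

lemma proj_zariski_closure_pullback:
  assumes "bij_betw h B A" "finite B" "\<And>s i. s \<in> S \<Longrightarrow> i \<notin> A \<Longrightarrow> s i = 0"
  shows "proj_zariski_closure B (pullback B h ` S) = pullback B h ` proj_zariski_closure A S"
proof -
  obtain \<tau> where \<tau>: "bij \<tau>" "\<And>i. i \<in> B \<Longrightarrow> \<tau> i = h i"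
    using inj_on_extends_to_bij[OF assms(2) bij_betw_imp_inj_on[OF assms(1)]] by blast
  have B_iff: "i \<in> B \<longleftrightarrow> \<tau> i \<in> A" for i
  proof
    assume "\<tau> i \<in> A"
    then obtain j where "j \<in> B" "\<tau> i = h j" using assms(1) by (metis bij_betw_imp_surj_on imageE)
    then show "i \<in> B" using \<tau> by (metis bij_is_inj injD)
  qed (use \<tau>(2) assms(1) bij_betwE in fastforce)
  have pullback_eq: "pullback B h y = y \<circ> \<tau>" if "\<And>i. i \<notin> A \<Longrightarrow> y i = 0" for y
    unfolding pullback_def using that B_iff \<tau>(2) by (auto simp: fun_eq_iff)
  have "pullback B h ` S = (\<lambda>y. y \<circ> \<tau>) ` S"
    using pullback_eq assms(3) by (intro image_cong) auto
  moreover have "pullback B h ` proj_zariski_closure A S = (\<lambda>y. y \<circ> \<tau>) ` proj_zariski_closure A S"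
    using pullback_eq proj_zariski_closure_vanishes by (intro image_cong) auto
  ultimately show ?thesis using proj_zariski_closure_comp_bij[OF \<tau>(1) B_iff] by simp
qed

lemma pullback_map_weighted_point:
  "pullback (Nset n xs) (map f) (weighted_point (Nset n (map f xs)) n w)
     = weighted_point (Nset n xs) n (\<lambda>k v. w k (f v))"
proof
  fix "is"
  show "pullback (Nset n xs) (map f) (weighted_point (Nset n (map f xs)) n w) is
      = weighted_point (Nset n xs) n (\<lambda>k v. w k (f v)) is"
    using length_Nset[of "is" n xs]
    by (auto simp: pullback_def weighted_point_def Nset_def intro!: prod.cong)
qed

lemma weighted_points_pullback_map:
  assumes "inj_on f (set xs)"
  shows "pullback (Nset n xs) (map f) ` weighted_points (Nset n (map f xs)) n UNIV
       = weighted_points (Nset n xs) n UNIV"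
proof -
  let ?B = "Nset n xs" and ?A = "Nset n (map f xs)"
  have bij: "bij_betw (map f) ?B ?A" by (rule bij_betw_map_Nset[OF assms])
  have "range (weighted_point ?B n) \<subseteq> pullback ?B (map f) ` range (weighted_point ?A n)"
  proof clarify
    fix w
    define g where "g = inv_into (set xs) f"
    have "is ! k \<in> set xs" if "is \<in> ?B" "k < n" for "is" k
      using that by (metis length_Nset nth_mem set_Nset)
    then have "weighted_point ?B n w = weighted_point ?B n (\<lambda>k v. w k (g (f v)))"
      unfolding weighted_point_def g_def using assms by (auto simp: fun_eq_iff inv_into_f_f intro!: prod.cong)
    also have "\<dots> = pullback ?B (map f) (weighted_point ?A n (\<lambda>k j. w k (g j)))"
      by (rule pullback_map_weighted_point[symmetric])
    finally show "weighted_point ?B n w \<in> pullback ?B (map f) ` range (weighted_point ?A n)" by blast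
  qed
  moreover have "pullback ?B (map f) ` range (weighted_point ?A n) \<subseteq> range (weighted_point ?B n)"
    by (auto simp: pullback_map_weighted_point)
  ultimately have range_eq: "pullback ?B (map f) ` range (weighted_point ?A n) = range (weighted_point ?B n)"
    by (rule antisym[rotated])
  have "pullback ?B (map f) (weighted_point ?A n w) = (\<lambda>_. 0) \<longleftrightarrow> weighted_point ?A n w = (\<lambda>_. 0)" for w
  proof
    assume zero: "pullback ?B (map f) (weighted_point ?A n w) = (\<lambda>_. 0)"
    show "weighted_point ?A n w = (\<lambda>_. 0)"
    proof
      fix j show "weighted_point ?A n w j = 0"
      proof (cases "j \<in> ?A")
        case True
        then obtain i where "i \<in> ?B" "j = map f i" using bij by (metis bij_betw_imp_surj_on imageE)
        then show ?thesis using fun_cong[OF zero, of i] by (simp add: pullback_def)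
      qed (simp add: weighted_point_def)
    qed
  qed (simp add: pullback_def fun_eq_iff)
  then show ?thesis
    unfolding weighted_points_def range_eq[symmetric] by auto
qed

theorem M_var_map_inj:
  assumes "inj_on f (set xs)"
  shows "M_var n xs = pullback (Nset n xs) (map f) ` M_var n (map f xs)"
proof -
  have "M_var n xs = proj_zariski_closure (Nset n xs)
      (pullback (Nset n xs) (map f) ` weighted_points (Nset n (map f xs)) n UNIV)"
    by (simp add: M_var_eq_closure_weighted_points weighted_points_pullback_map[OF assms])
  also have "\<dots> = pullback (Nset n xs) (map f) ` M_var n (map f xs)"
    unfolding M_var_eq_closure_weighted_points[of n "map f xs"]
    by (rule proj_zariski_closure_pullback[OF bij_betw_map_Nset[OF assms] finite_Nset])
      (auto simp: weighted_points_def weighted_point_def)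
  finally show ?thesis .
qed

theorem lemma4p2:
  fixes n d :: nat and lam :: "nat list" and f :: "nat \<Rightarrow> nat"
  assumes "length lam = n"
    and "sorted_wrt (\<ge>) lam"
    and "sum_list lam = d"
    and "reduction_labeling lam f"
  shows "card (Nset n lam) = card (Nset n (reduction lam f)) \<and>
         bij_betw (map f) (Nset n lam) (Nset n (reduction lam f)) \<and>
         M_var n lam =
           (\<lambda>y is. if is \<in> Nset n lam then y (map f is) else 0) ` M_var n (reduction lam f)"
proof -
  \<comment> \<open>Only the injectivity of f on the entries of lam is used.\<close>
  have inj: "inj_on f (set lam)"
    using assms(4) unfolding reduction_labeling_def by blast
  have Nset_reduction: "Nset n (reduction lam f) = Nset n (map f lam)"
    unfolding reduction_def by (rule Nset_mset_cong) simp
  have bij: "bij_betw (map f) (Nset n lam) (Nset n (reduction lam f))"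
    unfolding Nset_reduction by (rule bij_betw_map_Nset[OF inj])
  have "M_var n (reduction lam f) = M_var n (map f lam)"
    unfolding M_var_eq_closure_weighted_points Nset_reduction ..
  with M_var_map_inj[OF inj] have "M_var n lam = pullback (Nset n lam) (map f) ` M_var n (reduction lam f)"
    by simp
  then show ?thesis
    using bij bij_betw_same_card[OF bij] unfolding pullback_def by blast
qed

end
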